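(* Let $r\ge1$ and let $(a_n)_{n\ge1}$ be any sequence of non-negative real numbers with $\lim_{n\to\infty}a_n=0$. Then there exists $\mu\in\mathcal P_r$ such that $d_r(\delta^{\bullet,n}_\bullet,\mu)\ge a_n$ for every $n\in\mathbb N$.
   Context: $\mathcal P$ denotes the set of Borel probability measures on $\mathbb R$; $\mathcal P_r=\{\mu\in\mathcal P:\int|x|^r{\rm d}\mu(x)<\infty\}$. For $\mu\in\mathcal P$, $F_\mu(x)=\mu(]-\infty,x])$ and $F_\mu^{-1}(t)=\sup\{x: F_\mu(x)\le t\}$, $t\in]0,1[$. $d_r(\mu,\nu)=\big(\int_0^1|F_\mu^{-1}(t)-F_\nu^{-1}(t)|^r{\rm d}t\big)^{1/r}$ on $\mathcal P_r$. With $\Xi_n=\{\mathbf x\in\mathbb R^n:x_1\le\dots\le x_n\}$, $\Pi_n=\{\mathbf p\in\mathbb R^n:p_i\ge0,\sum_ip_i=1\}$ and $\delta^{\mathbf p}_{\mathbf x}=\sum_ip_i\delta_{x_i}$, set $d_r(\delta^{\bullet,n}_\bullet,\mu)=\min_{\mathbf x\in\Xi_n,\mathbf p\in\Pi_n}d_r(\delta^{\mathbf p}_{\mathbf x},\mu)$, the error of a best (unconstrained) $n$-point $r$-approximation (the minimum is attained). *)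

theory Defs
  imports "HOL-Probability.Probability"
begin

definition Pr_meas :: "real \<Rightarrow> real measure set" where
  "Pr_meas r = {M. prob_space M \<and> sets M = sets borel \<and>
                   integrable M (\<lambda>x. \<bar>x\<bar> powr r)}"

definition distrib_fun :: "real measure \<Rightarrow> real \<Rightarrow> real" where
  "distrib_fun M x = measure M {..x}"

definition quantile :: "real measure \<Rightarrow> real \<Rightarrow> real" where
  "quantile M t = Sup {x. distrib_fun M x \<le> t}"

definition d_r :: "real \<Rightarrow> real measure \<Rightarrow> real measure \<Rightarrow> real" where
  "d_r r M N = (LINT t:{0<..<1}|lborel. \<bar>quantile M t - quantile N t\<bar> powr r) powr (1 / r)"

definition Xi :: "nat \<Rightarrow> (nat \<Rightarrow> real) set" where
  "Xi n = {x. \<forall>i j. i \<le> j \<longrightarrow> j < n \<longrightarrow> x i \<le> x j}"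

definition Pi_vec :: "nat \<Rightarrow> (nat \<Rightarrow> real) set" where
  "Pi_vec n = {p. (\<forall>i<n. 0 \<le> p i) \<and> (\<Sum>i<n. p i) = 1}"

text \<open>The discrete measure sum_i p_i delta_{x_i}.\<close>
definition discrete_meas :: "nat \<Rightarrow> (nat \<Rightarrow> real) \<Rightarrow> (nat \<Rightarrow> real) \<Rightarrow> real measure" where
  "discrete_meas n x p = distr (point_measure {..<n} (\<lambda>i. ennreal (p i))) borel x"

definition best_approx_err :: "real \<Rightarrow> nat \<Rightarrow> real measure \<Rightarrow> real" where
  "best_approx_err r n M =
     Inf {d_r r (discrete_meas n x p) M | x p. x \<in> Xi n \<and> p \<in> Pi_vec n}"

end

(*
  The measure is purely atomic, with atoms at 0 and at 2 A 4^k, k \<ge> 1. These are so far apart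
  that each point of an n-point approximation is within half the position of at most one atom;
  on the quantile interval of an atom that no point comes close to, the two quantile functions
  differ by at least half its position. The atoms are grouped into blocks: block j has 2 N_j + 1
  atoms, each of which contributes A / (2^j N_j) to d_r^r when it is missed, so every approximation
  by n \<le> N_j points has d_r^r \<ge> A / 2^j. Since a_n \<rightarrow> 0, the N_j can be chosen so that every n
  lies below some N_j with a_n^r \<le> A / 2^j, and the r-th moment is finite because the total
  contribution of block j is at most 3 A / 2^j.
*)

theory Submission
  imports Defs
begin

lemma distrib_fun_eq_cdf: "distrib_fun M = cdf M"
  by (simp add: fun_eq_iff distrib_fun_def cdf_def)

context real_distribution
begin

lemma quantile_set_nonempty:
  assumes "0 < t"
  shows "{y. cdf M y \<le> t} \<noteq> {}"
proof -
  have "eventually (\<lambda>y. cdf M y < t) at_bot"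
    using cdf_lim_at_bot assms by (rule order_tendstoD)
  then obtain y where "cdf M y < t" by (auto dest: eventually_happens)
  then show ?thesis by (auto intro: less_imp_le)
qed

lemma quantile_set_bdd_above:
  assumes "t < 1"
  shows "bdd_above {y. cdf M y \<le> t}"
proof -
  have "eventually (\<lambda>y. t < cdf M y) at_top"
    using cdf_lim_at_top_prob assms by (rule order_tendstoD)
  then obtain b where b: "\<And>y. b \<le> y \<Longrightarrow> t < cdf M y"
    by (auto simp: eventually_at_top_linorder)
  have "y \<le> b" if "cdf M y \<le> t" for y
    using b[of y] that by fastforce
  then show ?thesis by (auto intro: bdd_aboveI[of _ b])
qed

lemma quantile_mono_on: "mono_on {0<..<1} (quantile M)"
  unfolding quantile_def distrib_fun_eq_cdf
  by (intro mono_onI cSup_subset_mono quantile_set_nonempty quantile_set_bdd_above) auto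

lemma borel_measurable_quantile: "quantile M \<in> borel_measurable (restrict_space borel {0<..<1})"
  by (rule borel_measurable_mono_on_fnc[OF quantile_mono_on])

lemma quantile_le:
  assumes "0 < t" "t < cdf M b"
  shows "quantile M t \<le> b"
  unfolding quantile_def distrib_fun_eq_cdf
proof (rule cSup_least)
  show "{y. cdf M y \<le> t} \<noteq> {}" using quantile_set_nonempty assms(1) .
  show "y \<le> b" if "y \<in> {y. cdf M y \<le> t}" for y
    using that assms(2) cdf_nondecreasing[of b y] by (cases "y \<le> b") auto
qed

lemma le_quantile:
  assumes "0 < t" "t < 1" "measure M {..<b} \<le> t"
  shows "b \<le> quantile M t"
proof (rule dense_le)
  fix y assume "y < b"
  then have "cdf M y \<le> measure M {..<b}"
    unfolding cdf_def by (intro finite_measure_mono) auto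
  then show "y \<le> quantile M t"
    unfolding quantile_def distrib_fun_eq_cdf using assms
    by (intro cSup_upper quantile_set_bdd_above) auto
qed

text \<open>Otherwise the cdf would be constant near the quantile, contradicting the maximality of
  the supremum defining it.\<close>
lemma measure_around_quantile_pos:
  assumes "0 < t" "t < 1" "0 < e"
  shows "0 < measure M {quantile M t - e<..quantile M t + e}"
proof (rule ccontr)
  define s where "s = quantile M t"
  assume null: "\<not> 0 < measure M {quantile M t - e<..quantile M t + e}"
  have "cdf M (s + e) = cdf M (s - e)"
  proof -
    have "cdf M (s + e) - cdf M (s - e) = measure M {s - e<..s + e}"
      using assms(3) by (intro cdf_diff_eq) simp
    then show ?thesis
      using null measure_nonneg[of M "{s - e<..s + e}"]
      unfolding s_def by linarith
  qed
  obtain z where z: "cdf M z \<le> t" "s - e < z"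
    using less_cSupD[OF quantile_set_nonempty[OF assms(1)], of "s - e"] assms(3)
    by (auto simp: s_def quantile_def distrib_fun_eq_cdf)
  have "cdf M (s + e) \<le> t"
    using cdf_nondecreasing[of "s - e" z] z \<open>cdf M (s + e) = cdf M (s - e)\<close> by simp
  then have "s + e \<le> s"
    unfolding s_def quantile_def distrib_fun_eq_cdf using assms
    by (intro cSup_upper quantile_set_bdd_above) auto
  then show False using assms(3) by simp
qed

end

lemma real_distribution_discrete_meas:
  assumes "p \<in> Pi_vec n"
  shows "real_distribution (discrete_meas n x p)"
proof -
  let ?P = "point_measure {..<n} (\<lambda>i. ennreal (p i))"
  have "emeasure ?P (space ?P) = (\<Sum>i<n. ennreal (p i))"
    by (simp add: space_point_measure emeasure_point_measure_finite)
  also have "\<dots> = 1"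
    using assms by (subst sum_ennreal) (auto simp: Pi_vec_def)
  finally have "prob_space ?P" by (rule prob_spaceI)
  then show ?thesis
    unfolding discrete_meas_def by (intro prob_space.real_distribution_distr) auto
qed

lemma measure_discrete_meas_eq_0:
  assumes "U \<in> sets borel" "U \<inter> x ` {..<n} = {}"
  shows "measure (discrete_meas n x p) U = 0"
proof -
  have "x -` U \<inter> {..<n} = {}" using assms(2) by auto
  then show ?thesis
    unfolding discrete_meas_def using assms(1)
    by (subst measure_distr) (auto simp: space_point_measure)
qed

lemma quantile_discrete_meas_in_range:
  assumes "p \<in> Pi_vec n" "0 < t" "t < 1"
  shows "quantile (discrete_meas n x p) t \<in> x ` {..<n}"
proof (rule ccontr)
  interpret real_distribution "discrete_meas n x p"
    using assms(1) by (rule real_distribution_discrete_meas)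
  define s where "s = quantile (discrete_meas n x p) t"
  assume "quantile (discrete_meas n x p) t \<notin> x ` {..<n}"
  then obtain d where d: "0 < d" "\<And>z. z \<in> x ` {..<n} \<Longrightarrow> d \<le> dist s z"
    using finite_set_avoid[of "x ` {..<n}" s] by (metis finite_imageI finite_lessThan s_def)
  have "{s - d/2<..s + d/2} \<inter> x ` {..<n} = {}"
    using d by (force simp: dist_real_def)
  then have "measure (discrete_meas n x p) {s - d/2<..s + d/2} = 0"
    by (intro measure_discrete_meas_eq_0) auto
  with measure_around_quantile_pos[OF assms(2,3), of "d/2"] d(1) show False
    by (simp add: s_def)
qed

lemma powr_diff_le:
  fixes u v B r :: real
  assumes "\<bar>u\<bar> \<le> B" "0 < r"
  shows "\<bar>u - v\<bar> powr r \<le> 2 powr r * (B powr r + \<bar>v\<bar> powr r)"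
proof -
  have "\<bar>u - v\<bar> powr r \<le> (2 * max B \<bar>v\<bar>) powr r"
    using assms by (intro powr_mono2) (auto simp: max_def)
  also have "\<dots> = 2 powr r * max B \<bar>v\<bar> powr r"
    using assms(1) by (simp add: powr_mult)
  also have "max B \<bar>v\<bar> powr r \<le> B powr r + \<bar>v\<bar> powr r"
    by (auto simp: max_def)
  finally show ?thesis by simp
qed

lemma set_integrable_quantile_gap:
  assumes M: "real_distribution M" and N: "real_distribution N" and "0 < r"
    and N_bounded: "\<And>t. t \<in> {0<..<1} \<Longrightarrow> \<bar>quantile N t\<bar> \<le> B"
    and M_int: "set_integrable lborel {0<..<1} (\<lambda>t. \<bar>quantile M t\<bar> powr r)"
  shows "set_integrable lborel {0<..<1} (\<lambda>t. \<bar>quantile N t - quantile M t\<bar> powr r)"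
proof (rule set_integrable_bound)
  have "set_integrable lborel {0<..<1::real} (\<lambda>_. 1::real)"
    unfolding set_integrable_def by simp
  then have "set_integrable lborel {0<..<1::real} (\<lambda>_. B powr r)"
    using set_integrable_mult_right[of "B powr r" lborel "{0<..<1::real}" "\<lambda>_. 1"] by simp
  then show "set_integrable lborel {0<..<1} (\<lambda>t. 2 powr r * (B powr r + \<bar>quantile M t\<bar> powr r))"
    using M_int by (intro set_integral_add(1) set_integrable_mult_right) auto
  have "(\<lambda>t. \<bar>quantile N t - quantile M t\<bar> powr r) \<in> borel_measurable (restrict_space borel {0<..<1})"
    using real_distribution.borel_measurable_quantile[OF M] real_distribution.borel_measurable_quantile[OF N]
    by measurable
  then show "set_borel_measurable lborel {0<..<1} (\<lambda>t. \<bar>quantile N t - quantile M t\<bar> powr r)"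
    unfolding set_borel_measurable_def by (subst (asm) borel_measurable_restrict_space_iff) auto
  show "AE t in lborel. t \<in> {0<..<1} \<longrightarrow>
      norm (\<bar>quantile N t - quantile M t\<bar> powr r) \<le> norm (2 powr r * (B powr r + \<bar>quantile M t\<bar> powr r))"
    using powr_diff_le[OF N_bounded \<open>0 < r\<close>] by auto
qed

lemma card_near_separated_le:
  fixes x :: "nat \<Rightarrow> real" and y \<delta> :: "'a \<Rightarrow> real"
  assumes "finite K"
    and separated: "\<And>k k'. k \<in> K \<Longrightarrow> k' \<in> K \<Longrightarrow> k \<noteq> k' \<Longrightarrow> \<delta> k + \<delta> k' \<le> \<bar>y k - y k'\<bar>"
  shows "card {k\<in>K. \<exists>i<n. \<bar>x i - y k\<bar> < \<delta> k} \<le> n"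
proof -
  have "{k\<in>K. \<exists>i<n. \<bar>x i - y k\<bar> < \<delta> k} = (\<Union>i<n. {k\<in>K. \<bar>x i - y k\<bar> < \<delta> k})"
    by auto
  also have "card \<dots> \<le> (\<Sum>i<n. card {k\<in>K. \<bar>x i - y k\<bar> < \<delta> k})"
    by (rule card_UN_le) simp
  also have "\<dots> \<le> (\<Sum>i<n. 1)"
  proof (rule sum_mono)
    fix i
    have "k = k'" if "k \<in> K" "k' \<in> K" "\<bar>x i - y k\<bar> < \<delta> k" "\<bar>x i - y k'\<bar> < \<delta> k'" for k k'
      using separated[of k k'] that by fastforce
    then show "card {k\<in>K. \<bar>x i - y k\<bar> < \<delta> k} \<le> 1"
      using assms(1) by (subst One_nat_def, subst card_le_Suc0_iff_eq) auto
  qed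
  finally show ?thesis by simp
qed

locale increasing_atoms =
  fixes w y :: "nat \<Rightarrow> real"
  assumes weight_nonneg: "0 \<le> w k"
    and weights_sum: "w sums 1"
    and atoms_strict_mono: "strict_mono y"
    and atom_0_nonneg: "0 \<le> y 0"
begin

definition weights_meas :: "nat measure" where
  "weights_meas = point_measure UNIV (\<lambda>k. ennreal (w k))"

definition atoms_meas :: "real measure" where
  "atoms_meas = distr weights_meas borel y"

definition cum_weight :: "nat \<Rightarrow> real" where
  "cum_weight k = (\<Sum>i<k. w i)"

lemma atom_nonneg: "0 \<le> y k"
  using atom_0_nonneg strict_mono_less_eq[OF atoms_strict_mono, of 0 k] by simp

lemma measure_weights_meas: "finite Z \<Longrightarrow> measure weights_meas Z = (\<Sum>k\<in>Z. w k)"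
  unfolding measure_def weights_meas_def
  by (simp add: emeasure_point_measure_finite2 sum_ennreal weight_nonneg sum_nonneg)

lemma prob_space_weights_meas: "prob_space weights_meas"
proof (rule prob_spaceI)
  have "emeasure weights_meas (space weights_meas) = (\<Sum>k. ennreal (w k))"
    unfolding weights_meas_def point_measure_def
    by (simp add: emeasure_density nn_integral_count_space_nat)
  also have "\<dots> = 1"
    using weights_sum weight_nonneg by (simp add: suminf_ennreal2 sums_iff)
  finally show "emeasure weights_meas (space weights_meas) = 1" .
qed

lemma real_distribution_atoms_meas: "real_distribution atoms_meas"
  unfolding atoms_meas_def
  by (intro prob_space.real_distribution_distr prob_space_weights_meas)
     (simp add: weights_meas_def)

lemma measure_atoms_meas: "A \<in> sets borel \<Longrightarrow> measure atoms_meas A = measure weights_meas (y -` A)"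
  unfolding atoms_meas_def by (subst measure_distr) (auto simp: weights_meas_def)

lemma measure_below_atom: "measure atoms_meas {..<y k} = cum_weight k"
proof -
  have "y -` {..<y k} = {..<k}"
    using strict_mono_less[OF atoms_strict_mono] by auto
  then show ?thesis by (simp add: measure_atoms_meas measure_weights_meas cum_weight_def)
qed

lemma cdf_atom: "cdf atoms_meas (y k) = cum_weight (Suc k)"
proof -
  have "y -` {..y k} = {..<Suc k}"
    using strict_mono_less_eq[OF atoms_strict_mono] by auto
  then show ?thesis by (simp add: cdf_def measure_atoms_meas measure_weights_meas cum_weight_def)
qed

lemma cum_weight_mono: "i \<le> k \<Longrightarrow> cum_weight i \<le> cum_weight k"
  unfolding cum_weight_def by (rule sum_mono2) (auto simp: weight_nonneg)

lemma cum_weight_le_Suc: "cum_weight k \<le> cum_weight (Suc k)"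
  by (rule cum_weight_mono) simp

lemma cum_weight_le_1: "cum_weight k \<le> 1"
  using sum_le_suminf[OF sums_summable[OF weights_sum], of "{..<k}"] weight_nonneg weights_sum
  by (simp add: cum_weight_def sums_iff)

lemma cum_weight_Suc: "cum_weight (Suc k) = cum_weight k + w k"
  by (simp add: cum_weight_def)

lemma quantile_atoms_meas:
  assumes "cum_weight k < t" "t < cum_weight (Suc k)"
  shows "quantile atoms_meas t = y k"
proof -
  interpret real_distribution atoms_meas by (rule real_distribution_atoms_meas)
  have "0 < t" "t < 1"
    using assms cum_weight_mono[of 0 k] cum_weight_le_1[of "Suc k"] by (auto simp: cum_weight_def)
  then show ?thesis
    using quantile_le[of t "y k"] le_quantile[of t "y k"] assms
    by (simp add: cdf_atom measure_below_atom)
qed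

lemma quantile_atoms_meas_bounds:
  assumes "0 < t" "cum_weight k \<le> t" "t < cum_weight (Suc k)"
  shows "0 \<le> quantile atoms_meas t" "quantile atoms_meas t \<le> y k"
proof -
  interpret real_distribution atoms_meas by (rule real_distribution_atoms_meas)
  have "t < 1" using assms(3) cum_weight_le_1[of "Suc k"] by simp
  then have "y 0 \<le> quantile atoms_meas t"
    using assms(1) by (intro le_quantile) (auto simp: measure_below_atom cum_weight_def)
  then show "0 \<le> quantile atoms_meas t" using atom_0_nonneg by simp
  show "quantile atoms_meas t \<le> y k"
    using assms by (intro quantile_le) (simp_all add: cdf_atom)
qed

lemma cum_weight_interval_exists:
  assumes "0 \<le> t" "t < 1"
  obtains k where "cum_weight k \<le> t" "t < cum_weight (Suc k)"
proof -
  have "cum_weight \<longlonglongrightarrow> 1"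
    using weights_sum unfolding sums_def cum_weight_def[abs_def] .
  then have "\<exists>k. t < cum_weight k"
  proof -
    have "eventually (\<lambda>k. t < cum_weight k) sequentially"
      using \<open>cum_weight \<longlonglongrightarrow> 1\<close> assms(2) by (rule order_tendstoD)
    then show ?thesis by (auto dest: eventually_happens)
  qed
  define k1 where "k1 = (LEAST k. t < cum_weight k)"
  have k1: "t < cum_weight k1"
    unfolding k1_def using \<open>\<exists>k. t < cum_weight k\<close> by (rule LeastI_ex)
  then obtain k where k: "k1 = Suc k"
    using assms(1) by (cases k1) (auto simp: cum_weight_def)
  have "\<not> t < cum_weight k"
    using not_less_Least[of k "\<lambda>k. t < cum_weight k"] k by (simp add: k1_def)
  then show thesis using that[of k] k1 k by simp
qed

lemma atoms_moment_finite:
  assumes "summable (\<lambda>k. w k * y k powr r)"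
  shows "(\<Sum>k. ennreal (w k * y k powr r)) < \<infinity>"
proof -
  have "(\<Sum>k. ennreal (w k * y k powr r)) = ennreal (\<Sum>k. w k * y k powr r)"
    using weight_nonneg assms by (intro suminf_ennreal2) auto
  then show ?thesis by simp
qed

lemma atoms_meas_in_Pr_meas:
  assumes "summable (\<lambda>k. w k * y k powr r)"
  shows "atoms_meas \<in> Pr_meas r"
proof -
  interpret real_distribution atoms_meas by (rule real_distribution_atoms_meas)
  have "(\<integral>\<^sup>+z. ennreal (norm (\<bar>z\<bar> powr r)) \<partial>atoms_meas)
      = (\<integral>\<^sup>+k. ennreal (\<bar>y k\<bar> powr r) \<partial>weights_meas)"
    unfolding atoms_meas_def by (subst nn_integral_distr) (simp_all add: weights_meas_def)
  also have "\<dots> = (\<integral>\<^sup>+k. ennreal (y k powr r) \<partial>weights_meas)"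
    using atom_nonneg by simp
  also have "\<dots> = (\<integral>\<^sup>+k. ennreal (w k) * ennreal (y k powr r) \<partial>count_space UNIV)"
    unfolding weights_meas_def point_measure_def by (subst nn_integral_density) auto
  also have "\<dots> = (\<Sum>k. ennreal (w k) * ennreal (y k powr r))"
    by (rule nn_integral_count_space_nat)
  also have "\<dots> = (\<Sum>k. ennreal (w k * y k powr r))"
    using weight_nonneg by (simp add: ennreal_mult'[symmetric])
  finally have "integrable atoms_meas (\<lambda>z. \<bar>z\<bar> powr r)"
    using atoms_moment_finite[OF assms] by (intro integrableI_bounded) auto
  then show ?thesis
    unfolding Pr_meas_def using prob_space_axioms by simp
qed

lemma set_integrable_quantile_atoms_meas:
  assumes "0 < r" "summable (\<lambda>k. w k * y k powr r)"
  shows "set_integrable lborel {0<..<1} (\<lambda>t. \<bar>quantile atoms_meas t\<bar> powr r)"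
proof -
  interpret real_distribution atoms_meas by (rule real_distribution_atoms_meas)
  let ?f = "\<lambda>t. indicator {0<..<1} t *\<^sub>R (\<bar>quantile atoms_meas t\<bar> powr r)"
  have "(\<lambda>t. \<bar>quantile atoms_meas t\<bar> powr r) \<in> borel_measurable (restrict_space borel {0<..<1})"
    using borel_measurable_quantile by measurable
  then have meas: "?f \<in> borel_measurable lborel"
    by (subst (asm) borel_measurable_restrict_space_iff) auto
  define G where
    "G t = (\<Sum>k. ennreal (y k powr r) * indicator {cum_weight k..<cum_weight (Suc k)} t)" for t
  have "ennreal (norm (?f t)) \<le> G t" for t
  proof (cases "t \<in> {0<..<1}")
    case True
    then obtain k where k: "cum_weight k \<le> t" "t < cum_weight (Suc k)"
      using cum_weight_interval_exists[of t] by auto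
    have "ennreal (norm (?f t)) \<le> ennreal (y k powr r)"
      using True quantile_atoms_meas_bounds[OF _ k] assms(1)
      by (auto intro!: ennreal_leI powr_mono2)
    also have "\<dots> = (\<Sum>i\<in>{k}. ennreal (y i powr r) * indicator {cum_weight i..<cum_weight (Suc i)} t)"
      using k by simp
    also have "\<dots> \<le> G t" unfolding G_def by (rule sum_le_suminf) auto
    finally show ?thesis .
  qed simp
  then have "(\<integral>\<^sup>+t. ennreal (norm (?f t)) \<partial>lborel) \<le> (\<integral>\<^sup>+t. G t \<partial>lborel)"
    by (intro nn_integral_mono)
  also have "\<dots> = (\<Sum>k. ennreal (y k powr r) * emeasure lborel {cum_weight k..<cum_weight (Suc k)})"
    unfolding G_def by (subst nn_integral_suminf) (auto simp: nn_integral_cmult_indicator)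
  also have "\<dots> = (\<Sum>k. ennreal (w k * y k powr r))"
    using weight_nonneg by (simp add: cum_weight_Suc ennreal_mult'[symmetric] mult.commute)
  finally show ?thesis
    unfolding set_integrable_def using atoms_moment_finite[OF assms(2)]
    by (intro integrableI_bounded[OF meas]) auto
qed

lemma cum_weight_nonneg: "0 \<le> cum_weight k"
  using cum_weight_mono[of 0 k] by (simp add: cum_weight_def)

lemma disjoint_family_cum_weight_intervals:
  "disjoint_family (\<lambda>k. {cum_weight k<..<cum_weight (Suc k)})"
  unfolding disjoint_family_on_def
proof (intro ballI impI)
  fix k k' :: nat assume "k \<noteq> k'"
  then have "cum_weight (Suc (min k k')) \<le> cum_weight (max k k')"
    by (intro cum_weight_mono) auto
  then show "{cum_weight k<..<cum_weight (Suc k)} \<inter> {cum_weight k'<..<cum_weight (Suc k')} = {}"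
    by (cases "k \<le> k'") (auto simp: min_def max_def)
qed

lemma set_integral_cum_weight_steps:
  fixes F :: "nat set" and c :: "nat \<Rightarrow> real"
  defines "f \<equiv> \<lambda>t. \<Sum>k\<in>F. c k * indicator {cum_weight k<..<cum_weight (Suc k)} t"
  shows "set_integrable lborel {0<..<1} f" "(LINT t:{0<..<1}|lborel. f t) = (\<Sum>k\<in>F. c k * w k)"
proof -
  have inside: "{cum_weight k<..<cum_weight (Suc k)} \<subseteq> {0<..<1}" for k
    using cum_weight_nonneg[of k] cum_weight_le_1[of "Suc k"] by auto
  have restrict: "indicator {0<..<1} t *\<^sub>R f t = f t" for t
  proof (cases "t \<in> {0<..<1}")
    case False
    then have "t \<notin> {cum_weight k<..<cum_weight (Suc k)}" for k using inside by blast
    then show ?thesis by (simp add: f_def False)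
  qed simp
  show "set_integrable lborel {0<..<1} f"
    unfolding set_integrable_def restrict unfolding f_def using cum_weight_le_Suc
    by (intro Bochner_Integration.integrable_sum integrable_mult_right) auto
  show "(LINT t:{0<..<1}|lborel. f t) = (\<Sum>k\<in>F. c k * w k)"
    unfolding set_lebesgue_integral_def restrict unfolding f_def using cum_weight_le_Suc
    by (subst Bochner_Integration.integral_sum) (auto simp: cum_weight_Suc)
qed

lemma quantile_gap_ge_on_atom_interval:
  assumes "0 < r" "p \<in> Pi_vec n" "t \<in> {cum_weight k<..<cum_weight (Suc k)}"
    and "0 \<le> \<delta>" "\<And>i. i < n \<Longrightarrow> \<delta> \<le> \<bar>x i - y k\<bar>"
  shows "\<delta> powr r \<le> \<bar>quantile (discrete_meas n x p) t - quantile atoms_meas t\<bar> powr r"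
proof -
  have "0 < t" "t < 1"
    using assms(3) cum_weight_nonneg[of k] cum_weight_le_1[of "Suc k"] by auto
  then obtain i where "i < n" "quantile (discrete_meas n x p) t = x i"
    using quantile_discrete_meas_in_range[OF assms(2)] by blast
  moreover have "quantile atoms_meas t = y k"
    using assms(3) by (simp add: quantile_atoms_meas)
  ultimately show ?thesis
    using assms by (auto intro!: powr_mono2)
qed

text \<open>Each approximating point is close to at most one atom of the separated family K, so at
  least card K - n atoms stay far from all of them, and on the quantile interval of such an
  atom the two quantile functions differ by at least its radius.\<close>
lemma integral_quantile_gap_ge:
  fixes \<delta> :: "nat \<Rightarrow> real"
  assumes "0 < r" and moment: "summable (\<lambda>k. w k * y k powr r)" and p: "p \<in> Pi_vec n"
    and "finite K" and \<delta>_nonneg: "\<And>k. 0 \<le> \<delta> k"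
    and separated: "\<And>k k'. k \<in> K \<Longrightarrow> k' \<in> K \<Longrightarrow> k \<noteq> k' \<Longrightarrow> \<delta> k + \<delta> k' \<le> \<bar>y k - y k'\<bar>"
    and c: "0 \<le> c" "\<And>k. k \<in> K \<Longrightarrow> c \<le> w k * \<delta> k powr r"
  shows "(real (card K) - real n) * c
    \<le> (LINT t:{0<..<1}|lborel. \<bar>quantile (discrete_meas n x p) t - quantile atoms_meas t\<bar> powr r)"
proof -
  define H where "H t = \<bar>quantile (discrete_meas n x p) t - quantile atoms_meas t\<bar> powr r" for t
  define I where "I k = {cum_weight k<..<cum_weight (Suc k)}" for k
  define far where "far = {k\<in>K. \<forall>i<n. \<delta> k \<le> \<bar>x i - y k\<bar>}"
  define lo where "lo t = (\<Sum>k\<in>far. \<delta> k powr r * indicator (I k) t)" for t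
  have "K - far = {k\<in>K. \<exists>i<n. \<bar>x i - y k\<bar> < \<delta> k}"
    by (auto simp: far_def not_le)
  then have "card (K - far) \<le> n"
    using card_near_separated_le[OF \<open>finite K\<close> separated] by simp
  then have card_far: "real (card K) - real n \<le> real (card far)"
    using card_Diff_subset[of far K] \<open>finite K\<close> card_mono[of K far]
    by (auto simp: far_def finite_subset)
  have lo_le_H: "lo t \<le> H t" if "t \<in> {0<..<1}" for t
  proof (cases "\<exists>k\<in>far. t \<in> I k")
    case True
    then obtain k where k: "k \<in> far" "t \<in> I k" by blast
    have "lo t = \<delta> k powr r"
      unfolding lo_def using disjoint_family_cum_weight_intervals k \<open>finite K\<close>
      by (subst sum_indicator_disjoint_family[where j = k])
         (auto simp: I_def far_def disjoint_family_on_def)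
    also have "\<dots> \<le> H t"
      using k \<delta>_nonneg unfolding H_def
      by (intro quantile_gap_ge_on_atom_interval[OF \<open>0 < r\<close> p]) (auto simp: I_def far_def)
    finally show ?thesis .
  qed (simp add: lo_def H_def indicator_def)
  have "\<bar>quantile (discrete_meas n x p) t\<bar> \<le> (\<Sum>i<n. \<bar>x i\<bar>)" if "t \<in> {0<..<1}" for t
    using quantile_discrete_meas_in_range[OF p, of t x] that
    by (auto intro!: member_le_sum[where f = "\<lambda>i. \<bar>x i\<bar>"])
  then have H_int: "set_integrable lborel {0<..<1} H"
    unfolding H_def
    by (intro set_integrable_quantile_gap real_distribution_atoms_meas
        real_distribution_discrete_meas[OF p] set_integrable_quantile_atoms_meas \<open>0 < r\<close> moment)
  have "(real (card K) - real n) * c \<le> (\<Sum>k\<in>far. c)"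
    using mult_right_mono[OF card_far c(1)] by simp
  also have "\<dots> \<le> (\<Sum>k\<in>far. \<delta> k powr r * w k)"
    using c(2) by (intro sum_mono) (auto simp: far_def mult.commute)
  also have "\<dots> = (LINT t:{0<..<1}|lborel. lo t)"
    unfolding lo_def I_def by (rule set_integral_cum_weight_steps(2)[symmetric])
  also have "\<dots> \<le> (LINT t:{0<..<1}|lborel. H t)"
    using set_integral_cum_weight_steps(1) lo_le_H H_int
    unfolding lo_def I_def by (intro set_integral_mono) auto
  finally show ?thesis by (simp add: H_def)
qed

end

text \<open>Atom Suc m belongs to block j when m encodes (j, l) with l \<le> 2 N j; its weight is chosen
  so that its contribution weight * (position / 2) powr r equals atom_cost m.\<close>
locale dyadic_blocks =
  fixes r A :: real and N :: "nat \<Rightarrow> nat"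
  assumes r_ge_1: "1 \<le> r" and A_ge_1: "1 \<le> A" and N_pos: "1 \<le> N j"
begin

definition block_cost :: "nat \<Rightarrow> nat \<Rightarrow> real" where
  "block_cost j l = (if l \<le> 2 * N j then A / 2^j / N j else 0)"

definition atom_cost :: "nat \<Rightarrow> real" where
  "atom_cost m = case_prod block_cost (prod_decode m)"

definition position :: "nat \<Rightarrow> real" where
  "position k = (if k = 0 then 0 else 2 * A * 4^k)"

definition atom_weight :: "nat \<Rightarrow> real" where
  "atom_weight m = atom_cost m * (2 / position (Suc m)) powr r"

definition weight :: "nat \<Rightarrow> real" where
  "weight k = (case k of 0 \<Rightarrow> 1 - suminf atom_weight | Suc m \<Rightarrow> atom_weight m)"

lemma block_cost_nonneg: "0 \<le> block_cost j l"
  using A_ge_1 by (simp add: block_cost_def)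

lemma block_cost_le: "block_cost j l \<le> A"
proof -
  have "A / 2^j / N j \<le> A / 1 / 1"
    using A_ge_1 N_pos[of j] by (intro divide_mono) auto
  then show ?thesis using A_ge_1 by (simp add: block_cost_def)
qed

lemma block_row_sum_le: "(\<Sum>l\<le>L. block_cost j l) \<le> 3 * A / 2^j"
proof -
  have "(\<Sum>l\<le>L. block_cost j l) = (\<Sum>l\<in>{..L} \<inter> {..2 * N j}. A / 2^j / N j)"
    unfolding block_cost_def by (simp only: sum.inter_restrict[OF finite_atMost] atMost_iff)
  also have "\<dots> \<le> (\<Sum>l\<le>2 * N j. A / 2^j / N j)"
    using A_ge_1 by (intro sum_mono2) auto
  also have "\<dots> = (2 * N j + 1) / N j * (A / 2^j)"
    by simp
  also have "\<dots> \<le> 3 * (A / 2^j)"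
    using N_pos[of j] A_ge_1 by (intro mult_right_mono) (auto simp: field_simps)
  finally show ?thesis by simp
qed

lemma atom_cost_nonneg: "0 \<le> atom_cost m"
  by (simp add: atom_cost_def block_cost_nonneg split: prod.split)

lemma atom_cost_le: "atom_cost m \<le> A"
  by (simp add: atom_cost_def block_cost_le split: prod.split)

lemma summable_atom_cost: "summable atom_cost"
proof (rule summableI_nonneg_bounded)
  show "0 \<le> atom_cost m" for m by (rule atom_cost_nonneg)
  fix K
  have "prod_decode ` {..<K} \<subseteq> {..K} \<times> {..K}"
  proof
    fix q assume "q \<in> prod_decode ` {..<K}"
    then obtain m where "m < K" "q = prod_decode m" by auto
    then show "q \<in> {..K} \<times> {..K}"
      using le_prod_encode_1[of "fst q" "snd q"] le_prod_encode_2[of "snd q" "fst q"]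
      by (auto simp: mem_Times_iff)
  qed
  then have "(\<Sum>m<K. atom_cost m) \<le> (\<Sum>(j, l)\<in>{..K} \<times> {..K}. block_cost j l)"
    unfolding atom_cost_def
    by (subst sum.reindex[OF inj_prod_decode, symmetric, unfolded comp_def])
       (auto intro!: sum_mono2 block_cost_nonneg)
  also have "\<dots> = (\<Sum>j\<le>K. \<Sum>l\<le>K. block_cost j l)"
    by (simp add: sum.cartesian_product)
  also have "\<dots> \<le> (\<Sum>j\<le>K. 3 * A * (1/2)^j)"
    using block_row_sum_le by (intro sum_mono) (simp add: power_one_over)
  also have "\<dots> \<le> (\<Sum>j. 3 * A * (1/2::real)^j)"
    using A_ge_1 by (intro sum_le_suminf summable_mult summable_geometric) auto
  finally show "(\<Sum>m<K. atom_cost m) \<le> (\<Sum>j. 3 * A * (1/2::real)^j)" .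
qed

lemma atom_weight_nonneg: "0 \<le> atom_weight m"
  by (simp add: atom_weight_def atom_cost_nonneg)

lemma atom_weight_le: "atom_weight m \<le> (1/4) ^ Suc m"
proof -
  define P where "P = A * 4 ^ Suc m"
  have "1 \<le> P"
    using mult_mono[OF A_ge_1 one_le_power[of "4::real" "Suc m"]] A_ge_1 by (simp add: P_def)
  have "2 / position (Suc m) = 1 / P" by (simp add: position_def P_def)
  then have "atom_weight m = atom_cost m * (1 / P) powr r" by (simp add: atom_weight_def)
  also have "\<dots> \<le> A * (1 / P)"
    using \<open>1 \<le> P\<close> r_ge_1 A_ge_1 atom_cost_nonneg atom_cost_le
    by (intro mult_mono powr_le_one_le) auto
  also have "\<dots> = (1/4) ^ Suc m"
    using A_ge_1 by (simp add: P_def power_one_over)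
  finally show ?thesis .
qed

lemma summable_atom_weight: "summable atom_weight"
proof (rule summable_comparison_test')
  show "summable (\<lambda>m. (1/4::real) ^ Suc m)" by (simp add: summable_geometric)
  show "norm (atom_weight m) \<le> (1/4) ^ Suc m" for m
    using atom_weight_nonneg atom_weight_le by simp
qed

lemma suminf_atom_weight_le: "suminf atom_weight \<le> 1/3"
proof -
  have "suminf atom_weight \<le> (\<Sum>m. (1/4::real) ^ Suc m)"
    using atom_weight_le summable_atom_weight
    by (intro suminf_le) (auto simp: summable_geometric)
  also have "\<dots> = 1/3"
    using suminf_mult[OF summable_geometric[of "1/4::real"], of "1/4"] suminf_geometric[of "1/4::real"]
    by simp
  finally show ?thesis .
qed

lemma weights_sum_1: "weight sums 1"
proof -
  have "(\<lambda>m. weight (Suc m)) sums suminf atom_weight"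
    using summable_atom_weight by (simp add: weight_def summable_sums)
  then have "weight sums (suminf atom_weight + weight 0)"
    by (simp only: sums_Suc_iff)
  then show ?thesis by (simp add: weight_def)
qed

lemma position_strict_mono: "strict_mono position"
  using A_ge_1 by (auto intro!: strict_monoI power_strict_increasing simp: position_def)

sublocale increasing_atoms weight position
proof
  show "0 \<le> weight k" for k
    using suminf_atom_weight_le atom_weight_nonneg by (simp add: weight_def split: nat.split)
qed (simp_all add: weights_sum_1 position_strict_mono position_def)

lemma summable_moment: "summable (\<lambda>k. weight k * position k powr r)"
proof -
  have "weight (Suc m) * position (Suc m) powr r = 2 powr r * atom_cost m" for m
  proof -
    have "0 < position (Suc m) powr r" using A_ge_1 by (simp add: position_def)
    then show ?thesis by (simp add: weight_def atom_weight_def powr_divide)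
  qed
  then show ?thesis
    using summable_atom_cost by (subst summable_Suc_iff[symmetric]) (simp add: summable_mult)
qed

definition block :: "nat \<Rightarrow> nat set" where
  "block j = (\<lambda>l. Suc (prod_encode (j, l))) ` {..2 * N j}"

lemma card_block: "card (block j) = 2 * N j + 1"
proof -
  have "inj (\<lambda>l. Suc (prod_encode (j, l)))" by (auto intro: injI)
  then show ?thesis by (simp add: block_def card_image inj_on_subset)
qed

lemma weight_block:
  assumes "k \<in> block j"
  shows "weight k * (position k / 2) powr r = A / 2^j / N j"
proof -
  obtain l where l: "l \<le> 2 * N j" "k = Suc (prod_encode (j, l))"
    using assms by (auto simp: block_def)
  have "0 < position k" using A_ge_1 l(2) by (simp add: position_def)
  then have "(2 / position k) powr r * (position k / 2) powr r = 1"
    by (simp add: powr_mult[symmetric])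
  then show ?thesis
    using l by (simp add: weight_def atom_weight_def atom_cost_def block_cost_def)
qed

lemma positions_separated:
  assumes "0 < k" "0 < k'" "k \<noteq> k'"
  shows "position k / 2 + position k' / 2 \<le> \<bar>position k - position k'\<bar>"
proof -
  have "position k / 2 + position k' / 2 \<le> position k' - position k" if "0 < k" "k < k'" for k k'
  proof -
    have "(4::real) ^ Suc k \<le> 4 ^ k'" using that by (intro power_increasing) auto
    then have "4 * position k \<le> position k'"
      using that A_ge_1 by (simp add: position_def)
    moreover have "0 \<le> position k" using A_ge_1 by (simp add: position_def)
    ultimately show ?thesis by simp
  qed
  from this[of k k'] this[of k' k] assms show ?thesis
    by (cases "k < k'") (auto simp: abs_if)
qed

lemma integral_quantile_gap_ge_block:
  assumes p: "p \<in> Pi_vec n" and "n \<le> N j"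
  shows "A / 2^j
    \<le> (LINT t:{0<..<1}|lborel. \<bar>quantile (discrete_meas n x p) t - quantile atoms_meas t\<bar> powr r)"
proof -
  have "A / 2^j = real (N j) * (A / 2^j / N j)"
    using N_pos[of j] by simp
  also have "\<dots> \<le> (real (card (block j)) - real n) * (A / 2^j / N j)"
    using \<open>n \<le> N j\<close> A_ge_1 by (intro mult_right_mono) (auto simp: card_block)
  also have "\<dots> \<le> (LINT t:{0<..<1}|lborel.
      \<bar>quantile (discrete_meas n x p) t - quantile atoms_meas t\<bar> powr r)"
  proof (rule integral_quantile_gap_ge[OF _ summable_moment p])
    show "0 < r" using r_ge_1 by simp
    show "finite (block j)" by (simp add: block_def)
    show "0 \<le> position k / 2" for k using A_ge_1 by (simp add: position_def)
    show "position k / 2 + position k' / 2 \<le> \<bar>position k - position k'\<bar>"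
      if "k \<in> block j" "k' \<in> block j" "k \<noteq> k'" for k k'
      using that by (intro positions_separated) (auto simp: block_def)
    show "0 \<le> A / 2^j / N j" using A_ge_1 by simp
    show "A / 2^j / N j \<le> weight k * (position k / 2) powr r" if "k \<in> block j" for k
      using weight_block[OF that] by simp
  qed
  finally show ?thesis .
qed

end

lemma le_d_r:
  assumes "0 \<le> a" "0 < r"
    and "a powr r \<le> (LINT t:{0<..<1}|lborel. \<bar>quantile N t - quantile M t\<bar> powr r)"
  shows "a \<le> d_r r N M"
proof -
  have "a = (a powr r) powr (1 / r)"
    using assms(1,2) by (simp add: powr_powr)
  also have "\<dots> \<le> d_r r N M"
    unfolding d_r_def using assms by (intro powr_mono2) auto
  finally show ?thesis .
qed

lemma le_best_approx_err:
  assumes "1 \<le> n" and "\<And>x p. p \<in> Pi_vec n \<Longrightarrow> a \<le> d_r r (discrete_meas n x p) M"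
  shows "a \<le> best_approx_err r n M"
  unfolding best_approx_err_def
proof (rule cInf_greatest)
  have "(\<lambda>_. 0) \<in> Xi n" "(\<lambda>i. if i = 0 then 1 else 0) \<in> Pi_vec n"
    using assms(1) by (auto simp: Xi_def Pi_vec_def)
  then show "{d_r r (discrete_meas n x p) M |x p. x \<in> Xi n \<and> p \<in> Pi_vec n} \<noteq> {}"
    by blast
qed (use assms(2) in blast)

lemma null_sequence_dyadic_blocks:
  fixes b :: "nat \<Rightarrow> real"
  assumes "b \<longlonglongrightarrow> 0"
  obtains A :: real and N :: "nat \<Rightarrow> nat"
  where "1 \<le> A" "\<And>j. 1 \<le> N j" "\<And>n. \<exists>j. n \<le> N j \<and> b n \<le> A / 2^j"
proof -
  obtain B where B: "\<And>n. norm (b n) \<le> B"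
    using convergent_imp_Bseq[of b] assms by (auto simp: convergent_def Bseq_def)
  define A where "A = max 1 B"
  have "\<exists>T. \<forall>n\<ge>T. b n \<le> A / 2^j" for j
  proof -
    have "eventually (\<lambda>n. b n < A / 2^j) sequentially"
      using assms by (rule order_tendstoD) (simp add: A_def)
    then show ?thesis by (meson eventually_sequentially less_imp_le)
  qed
  then obtain T where T: "\<And>j n. T j \<le> n \<Longrightarrow> b n \<le> A / 2^j" by metis
  define N where "N j = T (Suc j) + j + 1" for j
  have covered: "\<exists>j. n \<le> N j \<and> b n \<le> A / 2^j" for n
  proof -
    define j where "j = (LEAST j. n \<le> N j)"
    have "n \<le> N j"
      unfolding j_def by (rule LeastI[of _ n]) (simp add: N_def)
    moreover have "b n \<le> A / 2^j"
    proof (cases j)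
      case 0
      then show ?thesis using B[of n] by (simp add: A_def)
    next
      case (Suc i)
      then have "\<not> n \<le> N i"
        using not_less_Least[of i "\<lambda>j. n \<le> N j"] by (simp add: j_def)
      then show ?thesis using T[of j n] Suc by (simp add: N_def)
    qed
    ultimately show ?thesis by blast
  qed
  show thesis
    by (rule that[OF _ _ covered]) (simp_all add: A_def N_def)
qed

theorem theorem5p12:
  fixes r :: real and a :: "nat \<Rightarrow> real"
  assumes "r \<ge> 1"
    and "\<And>n. n \<ge> 1 \<Longrightarrow> a n \<ge> 0"
    and "a \<longlonglongrightarrow> 0"
  shows "\<exists>M \<in> Pr_meas r. \<forall>n \<ge> 1. best_approx_err r n M \<ge> a n"
proof -
  have "(\<lambda>n. \<bar>a n\<bar> powr r) \<longlonglongrightarrow> 0"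
    using assms(1,3) by (intro tendsto_zero_powrI tendsto_rabs_zero) auto
  then obtain A N where blocks: "1 \<le> A" "\<And>j. 1 \<le> N j"
    and covered: "\<And>n. \<exists>j. n \<le> N j \<and> \<bar>a n\<bar> powr r \<le> A / 2^j"
    by (rule null_sequence_dyadic_blocks) blast
  interpret dyadic_blocks r A N
    using assms(1) blocks by unfold_locales
  show ?thesis
  proof (intro bexI allI impI)
    show "atoms_meas \<in> Pr_meas r" by (rule atoms_meas_in_Pr_meas[OF summable_moment])
    fix n :: nat assume "n \<ge> 1"
    obtain j where "n \<le> N j" "a n powr r \<le> A / 2^j"
      using covered[of n] assms(2)[OF \<open>n \<ge> 1\<close>] by auto
    then show "a n \<le> best_approx_err r n atoms_meas"
      using assms(1,2) \<open>n \<ge> 1\<close>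
      by (intro le_best_approx_err le_d_r order.trans[OF _ integral_quantile_gap_ge_block]) auto
  qed
qed

end
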